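(* Let $\mathcal{H}=(V,E)$ be a hypergraph with no repeated hyperedge, $V=\{v_1,\dots,v_n\}$, of range $k_{\max}\geq 2$, and let $\mathcal{A}_{\mathcal{H}}$ be its layered e-adjacency tensor (defined in the context). Let $\Delta=\max_{1\le i\le n}\deg(v_i)$ and $\Delta^\star=\max_{1\le i\le k_{\max}-1}\deg(y_i)$. Then every eigenvalue $\lambda$ of $\mathcal{A}_{\mathcal{H}}$ satisfies $|\lambda|\le \max(\Delta,\Delta^\star)$.
   Context: A hypergraph $\mathcal{H}=(V,E)$ on $V=\{v_1,\dots,v_n\}$ is a family $E$ of nonempty subsets (hyperedges) of $V$; it has no repeated hyperedge if its hyperedges are pairwise distinct. The range is $k_{\max}=\max\{|e|:e\in E\}$, and $\deg(v_i)$ is the number of hyperedges containing $v_i$. Introduce new pairwise distinct vertices $y_1,\dots,y_{k_{\max}-1}\notin V$. The layered uniform hypergraph of $\mathcal{H}$ is the $k_{\max}$-uniform hypergraph on $V\cup\{y_1,\dots,y_{k_{\max}-1}\}$ with hyperedges $e\cup\{y_{|e|},\dots,y_{k_{\max}-1}\}$ for $e\in E$; $\deg(y_i)$ is the number of these hyperedges containing $y_i$. The layered e-adjacency tensor $\mathcal{A}_{\mathcal{H}}=(a_{i_1\dots i_{k_{\max}}})$ is the symmetric hypermatrix of order $k_{\max}$ and dimension $N=n+k_{\max}-1$ (index $i\le n$ for $v_i$, index $n+l$ for $y_l$) such that: for each $e=\{v_{i_1},\dots,v_{i_j}\}\in E$ with $i_1<\dots<i_j$, putting $i_l=n+l-1$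 for $l\in\{j+1,\dots,k_{\max}\}$, every entry whose index tuple is a permutation of $(i_1,\dots,i_{k_{\max}})$ equals $\frac{1}{(k_{\max}-1)!}$; all other entries are $0$. Eigenvalues (in the sense of Qi): for a hypermatrix $\mathcal{A}=(a_{i_1\dots i_m})$ of order $m$ and dimension $N$, $\lambda\in\mathbb{C}$ is an eigenvalue if there exists a nonzero $x\in\mathbb{C}^N$ with $\sum_{i_2,\dots,i_m=1}^{N} a_{i i_2\dots i_m}x_{i_2}\cdots x_{i_m}=\lambda x_i^{m-1}$ for all $i\in\{1,\dots,N\}$. *)

theory Defs
  imports "HOL-Library.Multiset" Complex_Main
begin

text \<open>A hypergraph on vertices v_1..v_n is represented with 0-based indices:
  vertex v_(i+1) is index i < n. Its hyperedges are given as a list (a family,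
  possibly with repetitions) of subsets of {..<n}. The added vertex y_l
  (1 \<le> l \<le> kmax-1) is index n + l - 1, so the tensor dimension is n + kmax - 1.\<close>

definition kmax :: "nat set list \<Rightarrow> nat" where
  "kmax es = Max (card ` set es)"

definition tdim :: "nat \<Rightarrow> nat set list \<Rightarrow> nat" where
  "tdim n es = n + kmax es - 1"

text \<open>Layered hyperedge: e \<union> {y_|e|, ..., y_(kmax-1)}.\<close>
definition layered_edge :: "nat \<Rightarrow> nat set list \<Rightarrow> nat set \<Rightarrow> nat set" where
  "layered_edge n es e = e \<union> {n + card e - 1 ..< n + kmax es - 1}"

definition layered_tensor :: "nat \<Rightarrow> nat set list \<Rightarrow> nat list \<Rightarrow> real" where
  "layered_tensor n es idx =
     (if \<exists>e\<in>set es. mset idx = mset_set (layered_edge n es e)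
      then 1 / fact (kmax es - 1) else 0)"

definition deg_v :: "nat set list \<Rightarrow> nat \<Rightarrow> nat" where
  "deg_v es i = length (filter (\<lambda>e. i \<in> e) es)"

definition deg_y :: "nat \<Rightarrow> nat set list \<Rightarrow> nat \<Rightarrow> nat" where
  "deg_y n es l = length (filter (\<lambda>e. n + l - 1 \<in> layered_edge n es e) es)"

definition qi_eigenvalue :: "nat \<Rightarrow> nat \<Rightarrow> (nat list \<Rightarrow> real) \<Rightarrow> complex \<Rightarrow> bool" where
  "qi_eigenvalue m N A lam \<longleftrightarrow>
     (\<exists>x :: nat \<Rightarrow> complex. (\<exists>i<N. x i \<noteq> 0) \<and>
        (\<forall>i<N. (\<Sum>js\<in>{js. length js = m - 1 \<and> set js \<subseteq> {..<N}}.
                   complex_of_real (A (i # js)) * prod_list (map x js))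
               = lam * x i ^ (m - 1)))"

end

theory Submission
  imports Defs "HOL-Combinatorics.Multiset_Permutations"
begin

(* For a tensor with nonnegative entries, reading the eigen-equation at a coordinate where |x i|
   is maximal gives |lam| <= the i-th row sum. In row i of the layered tensor, a layered hyperedge
   containing the index i contributes the entry 1/(kmax-1)! at no more than (kmax-1)! index
   tuples, namely the orderings of its other vertices; so the row sum is at most the degree of i
   in the layered hypergraph, which is deg(v_i) or deg(y_l). *)

lemma norm_prod_list_le:
  fixes x :: "'i \<Rightarrow> 'a::real_normed_div_algebra"
  assumes "\<And>j. j \<in> set js \<Longrightarrow> norm (x j) \<le> M"
  shows "norm (prod_list (map x js)) \<le> M ^ length js"
  using assms
proof (induction js)
  case Nil
  then show ?case by simp
next
  case (Cons a js)
  have "norm (x a) \<le> M" and "norm (prod_list (map x js)) \<le> M ^ length js"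
    using Cons by auto
  then have "norm (x a) * norm (prod_list (map x js)) \<le> M * M ^ length js"
    by (intro mult_mono) (auto intro: order_trans[OF norm_ge_zero])
  then show ?case by (simp add: norm_mult)
qed

lemma qi_eigenvalue_norm_le_row_sum:
  assumes eig: "qi_eigenvalue m N A lam" and nonneg: "\<And>js. A js \<ge> 0"
  shows "\<exists>i<N. cmod lam \<le> (\<Sum>js\<in>{js. length js = m - 1 \<and> set js \<subseteq> {..<N}}. A (i # js))"
proof -
  define J where "J = {js. length js = m - 1 \<and> set js \<subseteq> {..<N}}"
  obtain x :: "nat \<Rightarrow> complex" and i where "i < N" "x i \<noteq> 0"
    and eq: "\<And>i. i < N \<Longrightarrow> (\<Sum>js\<in>J. complex_of_real (A (i # js)) * prod_list (map x js))
                               = lam * x i ^ (m - 1)"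
    using eig unfolding qi_eigenvalue_def J_def by blast
  obtain i0 where i0: "i0 < N" and max: "\<And>j. j < N \<Longrightarrow> cmod (x j) \<le> cmod (x i0)"
  proof -
    have "Max ((\<lambda>j. cmod (x j)) ` {..<N}) \<in> (\<lambda>j. cmod (x j)) ` {..<N}"
      using \<open>i < N\<close> by (intro Max_in) auto
    then obtain i0 where "i0 < N" "cmod (x i0) = Max ((\<lambda>j. cmod (x j)) ` {..<N})"
      by auto
    then show thesis
      using that[of i0] by simp
  qed
  define M where "M = cmod (x i0)"
  have "M > 0"
    using max[OF \<open>i < N\<close>] \<open>x i \<noteq> 0\<close> unfolding M_def by (meson less_le_trans zero_less_norm_iff)
  have "cmod lam * M ^ (m - 1) = cmod (\<Sum>js\<in>J. complex_of_real (A (i0 # js)) * prod_list (map x js))"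
    using eq[OF i0] by (simp add: M_def norm_mult norm_power)
  also have "\<dots> \<le> (\<Sum>js\<in>J. A (i0 # js) * M ^ (m - 1))"
  proof (rule order_trans[OF norm_sum sum_mono])
    fix js assume "js \<in> J"
    then have "cmod (prod_list (map x js)) \<le> M ^ (m - 1)"
      using norm_prod_list_le[of js x M] max unfolding J_def M_def by auto
    then show "cmod (complex_of_real (A (i0 # js)) * prod_list (map x js)) \<le> A (i0 # js) * M ^ (m - 1)"
      using nonneg[of "i0 # js"] by (simp add: norm_mult mult_left_mono)
  qed
  also have "\<dots> = (\<Sum>js\<in>J. A (i0 # js)) * M ^ (m - 1)"
    by (simp add: sum_distrib_right)
  finally have "cmod lam \<le> (\<Sum>js\<in>J. A (i0 # js))"
    using \<open>M > 0\<close> by simp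
  then show ?thesis
    using i0 unfolding J_def by blast
qed

lemma finite_Cons_mset_eq: "finite {js. mset (i # js) = M}"
proof (rule finite_subset)
  show "{js. mset (i # js) = M} \<subseteq> permutations_of_multiset (M - {#i#})"
    by (auto simp: permutations_of_multiset_def)
qed simp

lemma card_Cons_mset_eq_mset_set:
  assumes "finite S"
  shows "card {js. mset (i # js) = mset_set S} = (if i \<in> S then fact (card S - 1) else 0)"
proof (cases "i \<in> S")
  case True
  have "mset (i # js) = mset_set S \<longleftrightarrow> mset js = mset_set (S - {i})" for js
    using assms True by (auto simp: mset_set_Diff dest: sym)
  then have "{js. mset (i # js) = mset_set S} = permutations_of_set (S - {i})"
    using assms by (simp add: permutations_of_set_altdef permutations_of_multiset_def)
  then show ?thesis
    using assms True by simp
next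
  case False
  have "{js. mset (i # js) = mset_set S} = {}"
    using assms False by (auto dest!: arg_cong[where f = set_mset])
  then show ?thesis
    using False by simp
qed

lemma card_layered_edge_le:
  assumes "e \<in> set es" "finite e"
  shows "card (layered_edge n es e) \<le> kmax es"
proof -
  have "card e \<le> kmax es"
    unfolding kmax_def using assms by (intro Max_ge) auto
  then have "card e + card {n + card e - 1 ..< n + kmax es - 1} \<le> kmax es"
    by simp
  then show ?thesis
    unfolding layered_edge_def using card_Un_le[of e] order_trans by blast
qed

definition layered_deg :: "nat \<Rightarrow> nat set list \<Rightarrow> nat \<Rightarrow> nat" where
  "layered_deg n es i = length (filter (\<lambda>e. i \<in> layered_edge n es e) es)"

lemma layered_tensor_row_sum_le:
  assumes "\<forall>e\<in>set es. finite e"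
  shows "(\<Sum>js\<in>{js. length js = kmax es - 1 \<and> set js \<subseteq> {..<N}}. layered_tensor n es (i # js))
           \<le> real (layered_deg n es i)"
proof -
  define J where "J = {js. length js = kmax es - 1 \<and> set js \<subseteq> {..<N}}"
  define c :: real where "c = 1 / fact (kmax es - 1)"
  define L where "L = layered_edge n es"
  define hits where "hits e = {js. mset (i # js) = mset_set (L e)}" for e
  define H where "H = (\<Union>e\<in>set es. hits e)"
  have "c \<ge> 0"
    by (simp add: c_def)
  have "finite J"
    unfolding J_def using finite_lists_length_eq[of "{..<N}" "kmax es - 1"]
    by (simp add: conj_commute)
  have "finite H"
    unfolding H_def hits_def by (intro finite_UN_I finite_set finite_Cons_mset_eq)
  have entry: "layered_tensor n es (i # js) = (if js \<in> H then c else 0)" for js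
    unfolding layered_tensor_def H_def hits_def L_def c_def by simp
  have "(\<Sum>js\<in>J. layered_tensor n es (i # js)) = c * card (J \<inter> H)"
    using sum.inter_restrict[OF \<open>finite J\<close>, of "\<lambda>_. c" H] by (simp add: entry mult.commute)
  also have "\<dots> \<le> c * card H"
    using \<open>finite H\<close> \<open>c \<ge> 0\<close> by (intro mult_left_mono) (simp_all add: card_mono)
  also have "\<dots> \<le> c * (\<Sum>e\<in>set es. card (hits e))"
  proof -
    have "card H \<le> (\<Sum>e\<in>set es. card (hits e))"
      unfolding H_def by (rule card_UN_le) simp
    then have "real (card H) \<le> real (\<Sum>e\<in>set es. card (hits e))"
      by (simp only: of_nat_le_iff)
    then show ?thesis
      using \<open>c \<ge> 0\<close> by (rule mult_left_mono)
  qed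
  also have "\<dots> \<le> (\<Sum>e\<in>set es. of_bool (i \<in> L e))"
    unfolding of_nat_sum sum_distrib_left
  proof (rule sum_mono)
    fix e assume "e \<in> set es"
    then have "finite (L e)" "card (L e) \<le> kmax es"
      using assms card_layered_edge_le by (auto simp: L_def layered_edge_def)
    moreover have "card (hits e) = (if i \<in> L e then fact (card (L e) - 1) else 0)"
      unfolding hits_def using \<open>finite (L e)\<close> by (rule card_Cons_mset_eq_mset_set)
    ultimately have "real (card (hits e)) \<le> of_bool (i \<in> L e) * fact (kmax es - 1)"
      by (simp add: fact_mono)
    then show "c * real (card (hits e)) \<le> of_bool (i \<in> L e)"
      by (simp add: c_def field_simps)
  qed
  also have "\<dots> = real (card (set (filter (\<lambda>e. i \<in> L e) es)))"
    by (simp add: Int_def conj_commute)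
  also have "\<dots> \<le> real (layered_deg n es i)"
    unfolding layered_deg_def L_def by (simp only: of_nat_le_iff card_length)
  finally show ?thesis
    unfolding J_def .
qed

lemma layered_deg_eq_deg_v:
  assumes "\<forall>e\<in>set es. finite e \<and> e \<noteq> {}" "i < n"
  shows "layered_deg n es i = deg_v es i"
proof -
  have "i \<in> layered_edge n es e \<longleftrightarrow> i \<in> e" if "e \<in> set es" for e
  proof -
    have "card e \<ge> 1"
      using assms(1) that by (simp add: Suc_le_eq card_gt_0_iff)
    then show ?thesis
      using assms(2) unfolding layered_edge_def by auto
  qed
  then show ?thesis
    unfolding layered_deg_def deg_v_def by (metis (no_types, lifting) filter_cong)
qed

lemma layered_deg_le_max_deg:
  assumes "\<forall>e\<in>set es. finite e \<and> e \<noteq> {}" "i < tdim n es"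
  shows "layered_deg n es i \<le> max (Max (deg_v es ` {..<n})) (Max (deg_y n es ` {1..kmax es - 1}))"
proof (cases "i < n")
  case True
  then have "deg_v es i \<le> Max (deg_v es ` {..<n})"
    by (intro Max_ge) auto
  then show ?thesis
    using layered_deg_eq_deg_v[OF assms(1) True] by simp
next
  case False
  define l where "l = i - n + 1"
  have l: "l \<in> {1..kmax es - 1}" "i = n + l - 1"
    using False assms(2) unfolding l_def tdim_def by auto
  then have "deg_y n es l \<le> Max (deg_y n es ` {1..kmax es - 1})"
    by (intro Max_ge) auto
  then show ?thesis
    using l(2) by (simp add: deg_y_def layered_deg_def)
qed

theorem mainTheorem2:
  fixes n :: nat and es :: "nat set list" and lam :: complex
  assumes edges: "\<forall>e\<in>set es. e \<noteq> {} \<and> e \<subseteq> {..<n}"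
    and no_repeat: "distinct es"
    and range: "kmax es \<ge> 2"
    and eig: "qi_eigenvalue (kmax es) (tdim n es) (layered_tensor n es) lam"
  shows "cmod lam \<le> real (max (Max (deg_v es ` {..<n}))
                             (Max (deg_y n es ` {1..kmax es - 1})))"
proof -
  have finite_edges: "\<forall>e\<in>set es. finite e \<and> e \<noteq> {}"
    using edges finite_subset by blast
  obtain i where "i < tdim n es" and row:
    "cmod lam \<le> (\<Sum>js\<in>{js. length js = kmax es - 1 \<and> set js \<subseteq> {..<tdim n es}}.
                     layered_tensor n es (i # js))"
    using qi_eigenvalue_norm_le_row_sum[OF eig] by (force simp: layered_tensor_def)
  note row
  also have "\<dots> \<le> real (layered_deg n es i)"
    using finite_edges by (intro layered_tensor_row_sum_le) simp
  also have "\<dots> \<le> real (max (Max (deg_v es ` {..<n})) (Max (deg_y n es ` {1..kmax es - 1})))"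
    using layered_deg_le_max_deg[OF finite_edges \<open>i < tdim n es\<close>] by linarith
  finally show ?thesis .
qed

end
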